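(* Suppose $\mathcal U$ is quasiconvex and strongly stable with parameters $a,b,q$, and let $L=b\bigl(1+\max_{i,j\in\mathbb K}\|F^{(i)}-F^{(j)}\|^{q-1}\bigr)$. Then for every admissible policy $\pi$ and every $T\ge1$, $$\tilde{\mathcal R}(\pi,T)\le\frac{L}{T}\sum_{i\ne i^*}\mathbb E[\tau_i(T)]\,\|F^{(i^* )}-F^{(i)}\|.$$
   Context: Bandit setting: $K\ge1$, $\mathbb K=\{1,\dots,K\}$; arm $i$ produces i.i.d. rewards $X^{(i)}_1,X^{(i)}_2,\dots$ with distribution function $F^{(i)}$, all rewards mutually independent. An admissible policy $\pi=(\pi_1,\pi_2,\dots)$ chooses $\pi_t\in\mathbb K$ as a measurable function of an independent randomization variable $V$ and past actions/rewards; $\tau_i(t)=\sum_{s\le t}\mathbf 1\{\pi_s=i\}$, and the reward at time $t$ is $X^\pi_t=X^{(i)}_{\tau_i(t)}$ on $\{\pi_t=i\}$. Empirical distribution functions: $\hat F_t(x_1,\dots,x_t;y)=\frac1t\sum_{s\le t}\mathbf 1\{x_s\le y\}$, $\hat F^{(i)}_t=\hat F_t(X^{(i)}_1,\dots,X^{(i)}_t;\cdot)$; $\hat{\mathcal D}$ is the set of all empirical distribution functions of finite real sequences. $\Delta_{K-1}$ is the probability simplex in $\mathbb R^K$, $F_p=\sum_ip_iF^{(i)}$, $\mathcal D^\Delta=\{F_p:p\in\Delta_{K-1}\}$. $(L,\|\cdot\|)$ is a Banach space of bounded functions on $\mathbb R$ containing $\mathcal D^\Delta\cup\hat{\mathcal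 D}$, and $\mathcal U:L\to\mathbb R$. $\mathcal U$ is quasiconvex if $\mathcal U(\lambda F+(1-\lambda)G)\le\max\{\mathcal U(F),\mathcal U(G)\}$. $\mathcal U$ is strongly stable if (1) there exist $b>0,q\ge1$ with $|\mathcal U(F)-\mathcal U(G)|\le b(\|F-G\|+\|F-G\|^q)$ for all $F\in\mathcal D^\Delta$, $G\in\mathcal D^\Delta\cup\hat{\mathcal D}$, and (2) there is $a>0$ with $\mathbb P(\|\hat F^{(i)}_t-F^{(i)}\|\ge x)\le2\exp(-atx^2)$ for all $i\in\mathbb K$, $x>0$, $t\ge1$. Let $p^*\in\arg\max_{p\in\Delta_{K-1}}\mathcal U(F_p)$, $\Delta_i=\mathcal U(F_{p^*})-\mathcal U(F^{(i)})$ and $i^*\in\arg\min_{i}\Delta_i$. The proxy distribution is $\tilde F^\pi_T=\frac1T\sum_{i=1}^K\tau_i(T)F^{(i)}$ and the proxy regret is $\tilde{\mathcal R}(\pi,T)=\mathbb E[\mathcal U(F_{p^*})-\mathcal U(\tilde F^\pi_T)]$. *)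

theory Defs
  imports "HOL-Probability.Probability"
begin

text \<open>Arms are indexed by {1..K}; rewards of arm i are X i 1, X i 2, ...\<close>

definition prob_simplex :: "nat \<Rightarrow> (nat \<Rightarrow> real) set" where
  "prob_simplex K = {p. (\<forall>i\<in>{1..K}. 0 \<le> p i) \<and> (\<Sum>i\<in>{1..K}. p i) = 1}"

definition mix :: "nat \<Rightarrow> (nat \<Rightarrow> real \<Rightarrow> real) \<Rightarrow> (nat \<Rightarrow> real) \<Rightarrow> real \<Rightarrow> real" where
  "mix K F p = (\<lambda>y. \<Sum>i\<in>{1..K}. p i * F i y)"

definition Dsimplex :: "nat \<Rightarrow> (nat \<Rightarrow> real \<Rightarrow> real) \<Rightarrow> (real \<Rightarrow> real) set" where
  "Dsimplex K F = {mix K F p | p. p \<in> prob_simplex K}"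

definition emp_df :: "real list \<Rightarrow> real \<Rightarrow> real" where
  "emp_df xs = (\<lambda>y. real (length (filter (\<lambda>x. x \<le> y) xs)) / real (length xs))"

definition Dhat :: "(real \<Rightarrow> real) set" where
  "Dhat = {emp_df xs | xs. xs \<noteq> []}"

definition banach_fun_space :: "(real \<Rightarrow> real) set \<Rightarrow> ((real \<Rightarrow> real) \<Rightarrow> real) \<Rightarrow> bool" where
  "banach_fun_space Lset nrm \<longleftrightarrow>
     (\<forall>f\<in>Lset. bounded (range f)) \<and>
     (\<lambda>y. 0) \<in> Lset \<and>
     (\<forall>f\<in>Lset. \<forall>g\<in>Lset. (\<lambda>y. f y + g y) \<in> Lset) \<and>
     (\<forall>f\<in>Lset. \<forall>c::real. (\<lambda>y. c * f y) \<in> Lset) \<and>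
     (\<forall>f\<in>Lset. 0 \<le> nrm f \<and> (nrm f = 0 \<longleftrightarrow> f = (\<lambda>y. 0))) \<and>
     (\<forall>f\<in>Lset. \<forall>c::real. nrm (\<lambda>y. c * f y) = \<bar>c\<bar> * nrm f) \<and>
     (\<forall>f\<in>Lset. \<forall>g\<in>Lset. nrm (\<lambda>y. f y + g y) \<le> nrm f + nrm g) \<and>
     (\<forall>g :: nat \<Rightarrow> real \<Rightarrow> real. (\<forall>n. g n \<in> Lset) \<and>
        (\<forall>e>0. \<exists>N. \<forall>m\<ge>N. \<forall>n\<ge>N. nrm (\<lambda>y. g m y - g n y) < e) \<longrightarrow>
        (\<exists>h\<in>Lset. (\<lambda>n. nrm (\<lambda>y. g n y - h y)) \<longlonglongrightarrow> 0))"

definition quasiconvex_on :: "(real \<Rightarrow> real) set \<Rightarrow> ((real \<Rightarrow> real) \<Rightarrow> real) \<Rightarrow> bool" where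
  "quasiconvex_on Lset U \<longleftrightarrow>
     (\<forall>F\<in>Lset. \<forall>G\<in>Lset. \<forall>l\<in>{0..1::real}.
        U (\<lambda>y. l * F y + (1 - l) * G y) \<le> max (U F) (U G))"

text \<open>Real power with the convention x^0 = 1 (also for x = 0), unlike powr.\<close>
definition rpow :: "real \<Rightarrow> real \<Rightarrow> real" where
  "rpow x r = (if r = 0 then 1 else x powr r)"

text \<open>History of a policy: hist phi X V t w is the function s \<mapsto> (pi_s, reward at s)
  on {1..t} (undefined elsewhere). phi t (v, h) chooses the arm at time t from the
  randomization value v and the history h on {1..<t}.\<close>
fun hist :: "(nat \<Rightarrow> 'v \<times> (nat \<Rightarrow> nat \<times> real) \<Rightarrow> nat) \<Rightarrow> (nat \<Rightarrow> nat \<Rightarrow> 'w \<Rightarrow> real)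
     \<Rightarrow> ('w \<Rightarrow> 'v) \<Rightarrow> nat \<Rightarrow> 'w \<Rightarrow> nat \<Rightarrow> nat \<times> real" where
  "hist phi X V 0 w = (\<lambda>_. undefined)"
| "hist phi X V (Suc t) w =
     (let h = hist phi X V t w; a = phi (Suc t) (V w, h)
      in h(Suc t := (a, X a (Suc (card {s\<in>{1..t}. fst (h s) = a})) w)))"

definition act :: "(nat \<Rightarrow> 'v \<times> (nat \<Rightarrow> nat \<times> real) \<Rightarrow> nat) \<Rightarrow> (nat \<Rightarrow> nat \<Rightarrow> 'w \<Rightarrow> real)
     \<Rightarrow> ('w \<Rightarrow> 'v) \<Rightarrow> nat \<Rightarrow> 'w \<Rightarrow> nat" where
  "act phi X V t w = fst (hist phi X V t w t)"

definition tau :: "(nat \<Rightarrow> 'v \<times> (nat \<Rightarrow> nat \<times> real) \<Rightarrow> nat) \<Rightarrow> (nat \<Rightarrow> nat \<Rightarrow> 'w \<Rightarrow> real)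
     \<Rightarrow> ('w \<Rightarrow> 'v) \<Rightarrow> nat \<Rightarrow> nat \<Rightarrow> 'w \<Rightarrow> nat" where
  "tau phi X V i t w = card {s\<in>{1..t}. act phi X V s w = i}"

definition admissible :: "nat \<Rightarrow> 'v measure \<Rightarrow> (nat \<Rightarrow> 'v \<times> (nat \<Rightarrow> nat \<times> real) \<Rightarrow> nat) \<Rightarrow> bool" where
  "admissible K MV phi \<longleftrightarrow>
     (\<forall>t\<ge>1. phi t \<in> measurable (MV \<Otimes>\<^sub>M PiM {1..<t} (\<lambda>_. count_space UNIV \<Otimes>\<^sub>M borel))
                                 (count_space {1..K}))"

end

theory Submission
  imports Defs
begin

(*
  Quasiconvexity makes every mixture of the arms' distributions at most as good as the best
  single arm, so the optimal mixture F_pstar has the same utility as F_istar. The proxy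
  distribution is itself a mixture F_p with p = tau(T)/T, and stability bounds
  U(F_istar) - U(F_p) by b (N + N^q) with N = ||F_istar - F_p||. The triangle inequality gives
  N <= sum_i p_i ||F_istar - F_i||, and since N is also at most the largest distance between
  arms, N^q <= N max_ij ||F_i - F_j||^(q-1). The resulting bound is linear in p, so taking
  expectations yields the claim.
*)

lemma banach_fun_spaceD:
  assumes "banach_fun_space Lset nrm"
  shows "(\<lambda>y. 0) \<in> Lset" and "nrm (\<lambda>y. 0) = 0"
    and "f \<in> Lset \<Longrightarrow> g \<in> Lset \<Longrightarrow> (\<lambda>y. f y + g y) \<in> Lset"
    and "f \<in> Lset \<Longrightarrow> (\<lambda>y. c * f y) \<in> Lset"
    and "f \<in> Lset \<Longrightarrow> 0 \<le> nrm f"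
    and "f \<in> Lset \<Longrightarrow> nrm (\<lambda>y. c * f y) = \<bar>c\<bar> * nrm f"
    and "f \<in> Lset \<Longrightarrow> g \<in> Lset \<Longrightarrow> nrm (\<lambda>y. f y + g y) \<le> nrm f + nrm g"
  using assms unfolding banach_fun_space_def by auto

lemma banach_fun_space_diff:
  assumes "banach_fun_space Lset nrm" "f \<in> Lset" "g \<in> Lset"
  shows "(\<lambda>y. f y - g y) \<in> Lset"
  using banach_fun_spaceD(3)[OF assms(1,2) banach_fun_spaceD(4)[OF assms(1,3), of "-1"]] by simp

lemma banach_fun_space_lincomb:
  assumes B: "banach_fun_space Lset nrm" and "finite S" "\<And>i. i \<in> S \<Longrightarrow> H i \<in> Lset"
  shows "(\<lambda>y. \<Sum>i\<in>S. c i * H i y) \<in> Lset"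
  using assms(2,3)
  by (induction S rule: finite_induct) (auto intro!: banach_fun_spaceD(1,3,4)[OF B])

lemma banach_fun_space_norm_lincomb_le:
  assumes B: "banach_fun_space Lset nrm" and "finite S" "\<And>i. i \<in> S \<Longrightarrow> H i \<in> Lset"
  shows "nrm (\<lambda>y. \<Sum>i\<in>S. c i * H i y) \<le> (\<Sum>i\<in>S. \<bar>c i\<bar> * nrm (H i))"
  using assms(2,3)
proof (induction S rule: finite_induct)
  case empty
  then show ?case using banach_fun_spaceD(2)[OF B] by simp
next
  case (insert x S)
  have "nrm (\<lambda>y. c x * H x y + (\<Sum>i\<in>S. c i * H i y))
      \<le> nrm (\<lambda>y. c x * H x y) + nrm (\<lambda>y. \<Sum>i\<in>S. c i * H i y)"
    using insert.prems banach_fun_space_lincomb[OF B insert.hyps(1), of H c]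
    by (intro banach_fun_spaceD(7)[OF B] banach_fun_spaceD(4)[OF B]) auto
  also have "\<dots> \<le> \<bar>c x\<bar> * nrm (H x) + (\<Sum>i\<in>S. \<bar>c i\<bar> * nrm (H i))"
    using insert banach_fun_spaceD(6)[OF B] by simp
  finally show ?case using insert.hyps by simp
qed

lemma quasiconvex_lincomb_le:
  assumes B: "banach_fun_space Lset nrm" and qc: "quasiconvex_on Lset U"
    and S: "finite S" and G: "\<And>i. i \<in> S \<Longrightarrow> G i \<in> Lset" "\<And>i. i \<in> S \<Longrightarrow> U (G i) \<le> c"
    and p: "\<And>i. i \<in> S \<Longrightarrow> 0 \<le> p i" "(\<Sum>i\<in>S. p i) = 1"
  shows "U (\<lambda>y. \<Sum>i\<in>S. p i * G i y) \<le> c"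
proof -
  have "S \<noteq> {}" using p(2) by auto
  from S this G p show ?thesis
  proof (induction S arbitrary: p rule: finite_ne_induct)
    case (singleton x)
    then show ?case by simp
  next
    case (insert x S)
    show ?case
    proof (cases "p x = 1")
      case True
      then have "(\<Sum>i\<in>S. p i) = 0" using insert.prems(4) insert.hyps by simp
      then have "\<forall>i\<in>S. p i = 0" using insert by (simp add: sum_nonneg_eq_0_iff)
      then show ?thesis using True insert by simp
    next
      case False
      define l where "l = 1 - p x"
      have "p x \<le> 1"
        using member_le_sum[of x "insert x S" p] insert by simp
      then have l: "0 < l" "l \<le> 1" using False insert.prems(3) by (auto simp: l_def)
      have sum_S: "(\<Sum>i\<in>S. p i) = l"
        using insert.prems(4) insert.hyps by (simp add: l_def)
      define H where "H = (\<lambda>y. \<Sum>i\<in>S. p i / l * G i y)"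
      have "H \<in> Lset"
        unfolding H_def using insert.prems(1) by (intro banach_fun_space_lincomb[OF B insert.hyps(1)]) auto
      have "U H \<le> c"
        unfolding H_def using insert l
        by (intro insert.IH) (auto simp: sum_divide_distrib[symmetric] sum_S)
      have "U (\<lambda>y. \<Sum>i\<in>insert x S. p i * G i y) = U (\<lambda>y. l * H y + (1 - l) * G x y)"
        using l insert.hyps by (simp add: H_def sum_distrib_left l_def add.commute)
      also have "\<dots> \<le> max (U H) (U (G x))"
        using qc \<open>H \<in> Lset\<close> insert.prems(1) l by (simp add: quasiconvex_on_def)
      finally show ?thesis using \<open>U H \<le> c\<close> insert.prems(2)[of x] by simp
    qed
  qed
qed

lemma add_powr_le_rpow_mult:
  fixes N D m q :: real
  assumes "0 \<le> N" "N \<le> D" "D \<le> m" "1 \<le> q"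
  shows "N + N powr q \<le> (1 + rpow m (q - 1)) * D"
proof -
  have "N powr q \<le> D * rpow m (q - 1)"
  proof (cases "D = 0 \<or> q = 1")
    case True
    then show ?thesis using assms by (auto simp: rpow_def)
  next
    case False
    then have "0 < D" "q \<noteq> 1" using assms by auto
    have "N powr q \<le> D powr q" using assms by (intro powr_mono2) auto
    also have "\<dots> = D * D powr (q - 1)"
      using \<open>0 < D\<close> by (simp add: powr_diff)
    also have "\<dots> \<le> D * m powr (q - 1)"
      using assms \<open>0 < D\<close> by (intro mult_left_mono powr_mono2) auto
    finally show ?thesis using \<open>q \<noteq> 1\<close> by (simp add: rpow_def)
  qed
  then show ?thesis using assms by (simp add: algebra_simps)
qed

lemma unit_vector_in_prob_simplex:
  "i \<in> {1..K} \<Longrightarrow> (\<lambda>j. if j = i then 1 else 0) \<in> prob_simplex K"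
  by (simp add: prob_simplex_def)

lemma mix_unit_vector:
  assumes "i \<in> {1..K}"
  shows "mix K F (\<lambda>j. if j = i then 1 else 0) = F i"
proof
  fix y
  have "(\<Sum>j\<in>{1..K}. (if j = i then 1 else 0) * F j y) = (\<Sum>j\<in>{1..K}. if i = j then F j y else 0)"
    by (intro sum.cong) auto
  then show "mix K F (\<lambda>j. if j = i then 1 else 0) y = F i y"
    using assms by (simp add: mix_def)
qed

lemma component_in_Dsimplex:
  assumes "i \<in> {1..K}"
  shows "F i \<in> Dsimplex K F"
proof -
  have "F i = mix K F (\<lambda>j. if j = i then 1 else 0)"
    using mix_unit_vector[OF assms] by simp
  then show ?thesis
    unfolding Dsimplex_def using unit_vector_in_prob_simplex[OF assms] by blast
qed

lemma quasiconvex_mix_le: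
  assumes "banach_fun_space Lset nrm" "quasiconvex_on Lset U" "Dsimplex K F \<subseteq> Lset"
    and "\<And>i. i \<in> {1..K} \<Longrightarrow> U (F i) \<le> c" and "p \<in> prob_simplex K"
  shows "U (mix K F p) \<le> c"
proof -
  have "U (\<lambda>y. \<Sum>i\<in>{1..K}. p i * F i y) \<le> c"
    using assms(3-5) component_in_Dsimplex
    by (intro quasiconvex_lincomb_le[OF assms(1,2)]) (auto simp: prob_simplex_def)
  then show ?thesis by (simp add: mix_def)
qed

lemma optimal_mix_value_eq_best_arm:
  assumes "banach_fun_space Lset nrm" "quasiconvex_on Lset U" "Dsimplex K F \<subseteq> Lset"
    and "\<forall>p\<in>prob_simplex K. U (mix K F p) \<le> U (mix K F pstar)" "pstar \<in> prob_simplex K"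
    and "istar \<in> {1..K}" "\<And>i. i \<in> {1..K} \<Longrightarrow> U (F i) \<le> U (F istar)"
  shows "U (mix K F pstar) = U (F istar)"
  using quasiconvex_mix_le[OF assms(1-3) assms(7) assms(5)]
    assms(4)[rule_format, OF unit_vector_in_prob_simplex[OF assms(6)]]
  by (simp add: mix_unit_vector[OF assms(6)])

lemma arm_dist_nonneg:
  assumes "banach_fun_space Lset nrm" "Dsimplex K F \<subseteq> Lset" "i \<in> {1..K}" "j \<in> {1..K}"
  shows "0 \<le> nrm (\<lambda>y. F i y - F j y)"
  using assms component_in_Dsimplex
  by (intro banach_fun_spaceD(5)[OF assms(1)] banach_fun_space_diff[OF assms(1)]) auto

definition max_arm_dist_rpow :: "nat \<Rightarrow> (nat \<Rightarrow> real \<Rightarrow> real) \<Rightarrow> ((real \<Rightarrow> real) \<Rightarrow> real) \<Rightarrow> real \<Rightarrow> real"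
  where "max_arm_dist_rpow K F nrm r =
    Max {rpow (nrm (\<lambda>y. F i y - F j y)) r | i j. i \<in> {1..K} \<and> j \<in> {1..K}}"

lemma rpow_arm_dist_le_max:
  assumes "i \<in> {1..K}" "j \<in> {1..K}"
  shows "rpow (nrm (\<lambda>y. F i y - F j y)) r \<le> max_arm_dist_rpow K F nrm r"
proof -
  have "finite {rpow (nrm (\<lambda>y. F i y - F j y)) r | i j. i \<in> {1..K} \<and> j \<in> {1..K}}"
    by (rule finite_image_set2) auto
  then show ?thesis unfolding max_arm_dist_rpow_def by (rule Max_ge) (use assms in blast)
qed

lemma max_arm_dist_rpow_nonneg:
  assumes "banach_fun_space Lset nrm" "Dsimplex K F \<subseteq> Lset" "1 \<le> K"
  shows "0 \<le> max_arm_dist_rpow K F nrm r"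
proof -
  have "0 \<le> rpow (nrm (\<lambda>y. F 1 y - F 1 y)) r"
    using arm_dist_nonneg[OF assms(1,2)] assms(3) by (simp add: rpow_def)
  also have "\<dots> \<le> max_arm_dist_rpow K F nrm r"
    using assms(3) by (intro rpow_arm_dist_le_max) auto
  finally show ?thesis .
qed

lemma mix_gap_le:
  assumes B: "banach_fun_space Lset nrm" and DL: "Dsimplex K F \<subseteq> Lset"
    and stable: "\<forall>G1\<in>Dsimplex K F. \<forall>G2\<in>Dsimplex K F.
      \<bar>U G1 - U G2\<bar> \<le> b * (nrm (\<lambda>y. G1 y - G2 y) + nrm (\<lambda>y. G1 y - G2 y) powr q)"
    and b: "0 \<le> b" and q: "1 \<le> q" and istar: "istar \<in> {1..K}" and p: "p \<in> prob_simplex K"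
  shows "U (F istar) - U (mix K F p)
    \<le> b * (1 + max_arm_dist_rpow K F nrm (q - 1))
        * (\<Sum>i\<in>{1..K} - {istar}. p i * nrm (\<lambda>y. F istar y - F i y))"
proof -
  let ?A = "{1..K}"
  define n where "n i = nrm (\<lambda>y. F istar y - F i y)" for i
  define N where "N = nrm (\<lambda>y. F istar y - mix K F p y)"
  define D where "D = (\<Sum>i\<in>?A. p i * n i)"
  define m where "m = Max (n ` ?A)"
  have p_nonneg: "\<And>i. i \<in> ?A \<Longrightarrow> 0 \<le> p i" and p_sum: "sum p ?A = 1"
    using p by (auto simp: prob_simplex_def)
  have diff_in: "(\<lambda>y. F istar y - F i y) \<in> Lset" if "i \<in> ?A" for i
    using DL component_in_Dsimplex istar that by (intro banach_fun_space_diff[OF B]) auto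
  have "(\<lambda>y. F istar y - mix K F p y) = (\<lambda>y. \<Sum>i\<in>?A. p i * (F istar y - F i y))"
    using p_sum by (simp add: fun_eq_iff mix_def right_diff_distrib sum_subtractf
        flip: sum_distrib_right)
  then have "N \<le> (\<Sum>i\<in>?A. \<bar>p i\<bar> * n i)"
    unfolding N_def n_def
    using banach_fun_space_norm_lincomb_le[OF B, of ?A "\<lambda>i y. F istar y - F i y" p] diff_in
    by simp
  then have "N \<le> D" using p_nonneg by (simp add: D_def)
  have "0 \<le> N"
    unfolding N_def using DL p istar component_in_Dsimplex
    by (intro banach_fun_spaceD(5)[OF B] banach_fun_space_diff[OF B]) (auto simp: Dsimplex_def)
  have "m \<in> n ` ?A" unfolding m_def using istar by (intro Max_in) auto
  then have "rpow m (q - 1) \<le> max_arm_dist_rpow K F nrm (q - 1)"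
    using istar by (auto simp: n_def intro: rpow_arm_dist_le_max)
  have "D \<le> (\<Sum>i\<in>?A. p i * m)"
    unfolding D_def m_def using p_nonneg by (intro sum_mono mult_left_mono) auto
  then have "D \<le> m" using p_sum by (simp flip: sum_distrib_right)
  have "n istar = 0" using banach_fun_spaceD(2)[OF B] by (simp add: n_def)
  then have D_eq: "D = (\<Sum>i\<in>?A - {istar}. p i * n i)"
    unfolding D_def using istar by (intro sum.mono_neutral_right) auto
  have "U (F istar) - U (mix K F p) \<le> b * (N + N powr q)"
    using stable component_in_Dsimplex[OF istar] p unfolding N_def Dsimplex_def by fastforce
  also have "\<dots> \<le> b * ((1 + rpow m (q - 1)) * D)"
    using add_powr_le_rpow_mult[OF \<open>0 \<le> N\<close> \<open>N \<le> D\<close> \<open>D \<le> m\<close> q] b by (rule mult_left_mono)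
  also have "\<dots> \<le> b * ((1 + max_arm_dist_rpow K F nrm (q - 1)) * D)"
    using \<open>rpow m (q - 1) \<le> _\<close> \<open>0 \<le> N\<close> \<open>N \<le> D\<close> b by (intro mult_left_mono mult_right_mono) auto
  finally show ?thesis by (simp add: D_eq n_def mult.assoc)
qed

lemma admissible_measurable_step:
  assumes "admissible K MV phi"
  shows "phi (Suc t)
    \<in> measurable (MV \<Otimes>\<^sub>M PiM {1..t} (\<lambda>_. count_space UNIV \<Otimes>\<^sub>M borel)) (count_space {1..K})"
  using assms[unfolded admissible_def, rule_format, of "Suc t"]
  by (simp add: atLeastLessThanSuc_atLeastAtMost)

lemma hist_extensional: "hist phi X V t w \<in> extensional {1..t}"
  by (induction t) (auto simp: extensional_def Let_def)

lemma act_in_arms: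
  assumes adm: "admissible K MV phi" and V: "V \<in> measurable M MV"
    and w: "w \<in> space M" and s: "1 \<le> s"
  shows "act phi X V s w \<in> {1..K}"
proof -
  obtain t where t: "s = Suc t" using s by (cases s) auto
  have "(V w, hist phi X V t w) \<in> space (MV \<Otimes>\<^sub>M PiM {1..t} (\<lambda>_. count_space UNIV \<Otimes>\<^sub>M borel))"
    using measurable_space[OF V w] hist_extensional
    by (auto simp: space_pair_measure space_PiM PiE_def)
  from measurable_space[OF admissible_measurable_step[OF adm] this] show ?thesis
    by (simp add: act_def t Let_def)
qed

lemma tau_le: "tau phi X V i T w \<le> T"
proof -
  have "card {s\<in>{1..T}. act phi X V s w = i} \<le> card {1..T}"
    by (rule card_mono) auto
  then show ?thesis by (simp add: tau_def)
qed

lemma sum_tau_eq: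
  assumes "admissible K MV phi" "V \<in> measurable M MV" "w \<in> space M"
  shows "(\<Sum>i\<in>{1..K}. tau phi X V i T w) = T"
proof -
  have "(\<lambda>s. act phi X V s w) ` {1..T} \<subseteq> {1..K}"
    using act_in_arms[OF assms] by auto
  from sum.group[OF _ _ this, of "\<lambda>_. 1::nat"] show ?thesis
    by (simp add: tau_def)
qed

lemma proxy_weights_in_prob_simplex:
  assumes "admissible K MV phi" "V \<in> measurable M MV" "w \<in> space M" "1 \<le> T"
  shows "(\<lambda>i. real (tau phi X V i T w) / real T) \<in> prob_simplex K"
proof -
  have "(\<Sum>i\<in>{1..K}. real (tau phi X V i T w)) = real T"
    using sum_tau_eq[OF assms(1-3)] by (metis of_nat_sum)
  then show ?thesis
    using assms(4) by (simp add: prob_simplex_def flip: sum_divide_distrib)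
qed

lemma proxy_gap_le:
  assumes "banach_fun_space Lset nrm" "Dsimplex K F \<subseteq> Lset"
    and "\<forall>G1\<in>Dsimplex K F. \<forall>G2\<in>Dsimplex K F.
      \<bar>U G1 - U G2\<bar> \<le> b * (nrm (\<lambda>y. G1 y - G2 y) + nrm (\<lambda>y. G1 y - G2 y) powr q)"
    and "0 \<le> b" "1 \<le> q" "istar \<in> {1..K}"
    and "admissible K MV phi" "V \<in> measurable M MV" "w \<in> space M" "1 \<le> T"
  shows "U (F istar) - U (\<lambda>y. (\<Sum>i\<in>{1..K}. real (tau phi X V i T w) * F i y) / real T)
    \<le> b * (1 + max_arm_dist_rpow K F nrm (q - 1)) / real T
        * (\<Sum>i\<in>{1..K} - {istar}. real (tau phi X V i T w) * nrm (\<lambda>y. F istar y - F i y))"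
proof -
  let ?p = "\<lambda>i. real (tau phi X V i T w) / real T"
  have "(\<lambda>y. (\<Sum>i\<in>{1..K}. real (tau phi X V i T w) * F i y) / real T) = mix K F ?p"
    by (simp add: mix_def fun_eq_iff sum_divide_distrib)
  moreover have "U (F istar) - U (mix K F ?p)
      \<le> b * (1 + max_arm_dist_rpow K F nrm (q - 1))
          * (\<Sum>i\<in>{1..K} - {istar}. ?p i * nrm (\<lambda>y. F istar y - F i y))"
    by (rule mix_gap_le[OF assms(1-6) proxy_weights_in_prob_simplex[OF assms(7-10)]])
  ultimately show ?thesis
    by (simp add: sum_distrib_left sum_divide_distrib mult_ac)
qed

lemma measurable_hist:
  assumes adm: "admissible K MV phi" and V: "V \<in> measurable M MV"
    and X: "\<And>i s. i \<in> {1..K} \<Longrightarrow> 1 \<le> s \<Longrightarrow> X i s \<in> borel_measurable M"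
  shows "hist phi X V t \<in> measurable M (PiM {1..t} (\<lambda>_. count_space UNIV \<Otimes>\<^sub>M borel))"
proof (induction t)
  case 0
  show ?case by (simp add: measurable_const space_PiM)
next
  case (Suc t)
  note hist_t[measurable] = Suc.IH
  define a where "a w = phi (Suc t) (V w, hist phi X V t w)" for w
  have a[measurable]: "a \<in> measurable M (count_space {1..K})"
    unfolding a_def using V admissible_measurable_step[OF adm] by measurable
  have [measurable]: "a \<in> measurable M (count_space UNIV)"
    using measurable_compose[OF a measurable_count_space, where g="\<lambda>x. x"] by simp
  define n where "n w = Suc (card {s\<in>{1..t}. fst (hist phi X V t w s) = a w})" for w
  have "n \<in> measurable M (count_space UNIV)"
    unfolding n_def by measurable
  then have n: "n \<in> measurable M (count_space {1..})"
    by (auto simp: measurable_count_space_eq2_countable n_def)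
  have "(\<lambda>w. X i (n w) w) \<in> borel_measurable M" if "i \<in> {1..K}" for i
    by (rule measurable_compose_countable'[OF _ n]) (use X that in auto)
  then have [measurable]: "(\<lambda>w. X (a w) (n w) w) \<in> borel_measurable M"
    by (rule measurable_compose_countable'[OF _ a]) auto
  have "hist phi X V (Suc t) = (\<lambda>w. (hist phi X V t w)(Suc t := (a w, X (a w) (n w) w)))"
    by (simp add: fun_eq_iff Let_def a_def n_def)
  then show ?case
    by (simp only:) (rule measurable_fun_upd[OF _ hist_t]; auto simp: atLeastAtMostSuc_conv)
qed

lemma borel_measurable_tau:
  assumes "admissible K MV phi" "V \<in> measurable M MV"
    and "\<And>i s. i \<in> {1..K} \<Longrightarrow> 1 \<le> s \<Longrightarrow> X i s \<in> borel_measurable M"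
  shows "(\<lambda>w. real (tau phi X V i T w)) \<in> borel_measurable M"
proof -
  have [measurable]: "(\<lambda>w. act phi X V s w) \<in> measurable M (count_space UNIV)" for s
  proof (cases s)
    case (Suc t)
    have "(\<lambda>w. hist phi X V s w s) \<in> measurable M (count_space UNIV \<Otimes>\<^sub>M borel)"
      using measurable_compose[OF measurable_hist[OF assms, where t=s] measurable_component_singleton]
      by (simp add: Suc)
    from measurable_compose[OF this measurable_fst] show ?thesis
      by (simp add: act_def)
  qed (simp add: act_def)
  show ?thesis unfolding tau_def by measurable
qed

lemma (in prob_space) integrable_tau:
  assumes "admissible K MV phi" "V \<in> measurable M MV"
    and "\<And>i s. i \<in> {1..K} \<Longrightarrow> 1 \<le> s \<Longrightarrow> X i s \<in> borel_measurable M"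
  shows "integrable M (\<lambda>w. real (tau phi X V i T w))"
proof (rule integrable_const_bound[where B="real T"])
  show "(\<lambda>w. real (tau phi X V i T w)) \<in> borel_measurable M"
    by (rule borel_measurable_tau[OF assms])
qed (simp add: tau_le)

theorem lemma6:
  fixes M :: "'w measure" and MV :: "'v measure" and V :: "'w \<Rightarrow> 'v"
    and X :: "nat \<Rightarrow> nat \<Rightarrow> 'w \<Rightarrow> real" and F :: "nat \<Rightarrow> real \<Rightarrow> real"
    and K :: nat and Lset :: "(real \<Rightarrow> real) set" and nrm :: "(real \<Rightarrow> real) \<Rightarrow> real"
    and U :: "(real \<Rightarrow> real) \<Rightarrow> real" and a b q :: real
    and pstar :: "nat \<Rightarrow> real" and istar :: nat
    and phi :: "nat \<Rightarrow> 'v \<times> (nat \<Rightarrow> nat \<times> real) \<Rightarrow> nat" and T :: nat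
  assumes "prob_space M"
    and "K \<ge> 1"
    and "V \<in> measurable M MV"
    and "prob_space.indep_vars M (\<lambda>_. borel) (\<lambda>(i, s). X i s) ({1..K} \<times> {1::nat..})"
    and "prob_space.indep_set M {V -` C \<inter> space M | C. C \<in> sets MV}
           (sigma_sets (space M) {X i s -` C \<inter> space M | i s C.
              i \<in> {1..K} \<and> s \<ge> 1 \<and> C \<in> sets borel})"
    and "\<forall>i\<in>{1..K}. \<forall>s\<ge>1. \<forall>y. measure M {w\<in>space M. X i s w \<le> y} = F i y"
    and "banach_fun_space Lset nrm"
    and "Dsimplex K F \<subseteq> Lset" and "Dhat \<subseteq> Lset"
    and "quasiconvex_on Lset U"
    and "b > 0" and "q \<ge> 1"
    and "\<forall>G1\<in>Dsimplex K F. \<forall>G2\<in>Dsimplex K F \<union> Dhat.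
           \<bar>U G1 - U G2\<bar> \<le> b * (nrm (\<lambda>y. G1 y - G2 y) + nrm (\<lambda>y. G1 y - G2 y) powr q)"
    and "a > 0"
    and "\<forall>i\<in>{1..K}. \<forall>x>0. \<forall>t\<ge>1.
           measure M {w\<in>space M. nrm (\<lambda>y. emp_df (map (\<lambda>s. X i s w) [1..<t+1]) y - F i y) \<ge> x}
             \<le> 2 * exp (- a * real t * x\<^sup>2)"
    and "pstar \<in> prob_simplex K"
    and "\<forall>p\<in>prob_simplex K. U (mix K F p) \<le> U (mix K F pstar)"
    and "istar \<in> {1..K}"
    and "\<forall>i\<in>{1..K}. U (mix K F pstar) - U (F istar) \<le> U (mix K F pstar) - U (F i)"
    and "admissible K MV phi"
    and "T \<ge> 1"
  shows "(\<integral>w. U (mix K F pstar)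
               - U (\<lambda>y. (\<Sum>i\<in>{1..K}. real (tau phi X V i T w) * F i y) / real T) \<partial>M)
         \<le> b * (1 + Max {rpow (nrm (\<lambda>y. F i y - F j y)) (q - 1) | i j. i \<in> {1..K} \<and> j \<in> {1..K}})
             / real T * (\<Sum>i\<in>{1..K} - {istar}.
                 (\<integral>w. real (tau phi X V i T w) \<partial>M) * nrm (\<lambda>y. F istar y - F i y))"
proof -
  interpret prob_space M by fact
  let ?L = "b * (1 + max_arm_dist_rpow K F nrm (q - 1))"
  let ?tau = "\<lambda>i w. real (tau phi X V i T w)"
  define g where
    "g w = ?L / real T * (\<Sum>i\<in>{1..K} - {istar}. ?tau i w * nrm (\<lambda>y. F istar y - F i y))" for w
  have X: "X i s \<in> borel_measurable M" if "i \<in> {1..K}" "1 \<le> s" for i s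
    using assms(4) that unfolding indep_vars_def by auto
  have opt: "U (mix K F pstar) = U (F istar)"
    using assms(19) by (intro optimal_mix_value_eq_best_arm[OF assms(7,10,8,17,16,18)]) auto
  have gap: "U (mix K F pstar) - U (\<lambda>y. (\<Sum>i\<in>{1..K}. ?tau i w * F i y) / real T) \<le> g w"
    if "w \<in> space M" for w
    using proxy_gap_le[OF assms(7,8) _ _ assms(12,18,20,3) that assms(21), of U b] assms(11,13) opt
    unfolding g_def by auto
  have tau_integrable: "integrable M (?tau i)" for i
    using X by (intro integrable_tau[OF assms(20,3)])
  have g_nonneg: "0 \<le> g w" for w
    using assms(11,18) arm_dist_nonneg[OF assms(7,8)] max_arm_dist_rpow_nonneg[OF assms(7,8,2)]
    unfolding g_def by (intro mult_nonneg_nonneg sum_nonneg divide_nonneg_nonneg) auto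
  \<comment> \<open>U is arbitrary, so the regret integrand need not be measurable (its integral is then 0);
    integral_mono' only asks for a nonnegative integrable majorant.\<close>
  have "(\<integral>w. U (mix K F pstar) - U (\<lambda>y. (\<Sum>i\<in>{1..K}. ?tau i w * F i y) / real T) \<partial>M)
      \<le> (\<integral>w. g w \<partial>M)"
    using tau_integrable gap g_nonneg by (intro integral_mono') (auto simp: g_def)
  also have "(\<integral>w. g w \<partial>M)
      = ?L / real T * (\<Sum>i\<in>{1..K} - {istar}. (\<integral>w. ?tau i w \<partial>M) * nrm (\<lambda>y. F istar y - F i y))"
    using tau_integrable by (simp add: g_def)
  finally show ?thesis by (simp add: max_arm_dist_rpow_def)
qed

end
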